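(* Let $\Omega_0$ be a distribution of a finite alphabet $\Sigma$ and $\mathsf{Obs}$ an observation function over $\Sigma$ with $\Omega_0\not\models\mathsf{Obs}$. Consider any sequence of distributions defined by: while $\mathit{CED}(\Omega_k,\mathsf{Obs})\neq\emptyset$, choose a non-empty $S_k\subseteq\mathit{CED}(\Omega_k,\mathsf{Obs})$ and for each $ce\in S_k$ a discrepancy $\delta_{ce}\in\mathcal D(ce)$, and set $\Omega_{k+1}=\Omega_k\cup\{\delta_{ce}\mid ce\in S_k\}$. Then every such sequence is finite, and its last element $\Omega'$ satisfies $\Omega'\models\mathsf{Obs}$ and $\Omega_0\prec\Omega'$. If moreover $S_k=\mathit{CED}(\Omega_k,\mathsf{Obs})$ at every step, the number of steps is at most $|\mathcal P(\Sigma)|$.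
   Context: $\sigma|_{\Sigma'}$ is the projection of a word onto $\Sigma'$; $\mathcal P(\Sigma)$ is the power set. A distribution of $\Sigma$ is a finite set of subsets of $\Sigma$ with union $\Sigma$. An observation function is a partial map $\mathsf{Obs}:\Sigma^\star\rightharpoonup\{+,-\}$ with finite domain. $\Omega\models\mathsf{Obs}$ means there exist $\mathcal L_{\Sigma_i}\subseteq\Sigma_i^\star$ ($\Sigma_i\in\Omega$) such that $\mathcal L=\{w\mid\forall\Sigma_i\in\Omega.\ w|_{\Sigma_i}\in\mathcal L_{\Sigma_i}\}$ satisfies $\sigma\in\mathcal L\iff\mathsf{Obs}(\sigma)=+$ on $\mathsf{Dom}(\mathsf{Obs})$. A counter-example to $\Omega\models\mathsf{Obs}$ is a pair $(\sigma_N,P)$ with $\mathsf{Obs}(\sigma_N)=-$ and $P:\Omega\to\mathsf{Dom}(\mathsf{Obs})$ with $\mathsf{Obs}(P(\Sigma_i))=+$ and $\sigma_N|_{\Sigma_i}=P(\Sigma_i)|_{\Sigma_i}$ for all $\Sigma_i\in\Omega$; $\mathit{CED}(\Omega,\mathsf{Obs})$ is the set of these. Discrepancies: for $\Sigma_i\in\Omega$, $\mathcal D_m^{\Sigma_i}(\sigma_N,P)$ is the set of symbols occurring a different number of times in $\sigma_N$ and $P(\Sigma_i)$; with $\theta=\Sigma\setminus\mathcal D_m^{\Sigma_i}$, $u=\sigma_N|_\theta$, $w=P(\Sigma_i)|_\theta$, $\pi$ the unique position bijection with $u[j]=w[\pi(j)]$ preserving the relative order of equal symbols, $\mathcal D_o^{\Sigma_i}(\sigma_N,P)=\{\{u[j],u[k]\}\mid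 j<k,\ \pi(j)>\pi(k)\}$. $\delta\subseteq\Sigma$ is a discrepancy iff for each $\Sigma_i\in\Omega$, $\delta\cap\mathcal D_m^{\Sigma_i}\ne\emptyset$ or $\delta$ contains an element of $\mathcal D_o^{\Sigma_i}$; $\mathcal D(ce)$ denotes the set of discrepancies of $ce$. $\Omega\preccurlyeq\Omega'$ iff each element of $\Omega$ is contained in some element of $\Omega'$; $\Omega\prec\Omega'$ iff $\Omega\preccurlyeq\Omega'$ and $\Omega'\not\preccurlyeq\Omega$. *)

theory Defs
  imports Main "HOL-Library.FuncSet"
begin

definition proj :: "'a list \<Rightarrow> 'a set \<Rightarrow> 'a list" where
  "proj w A = filter (\<lambda>x. x \<in> A) w"

definition distribution :: "'a set \<Rightarrow> 'a set set \<Rightarrow> bool" where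
  "distribution Sg Omega \<longleftrightarrow> finite Omega \<and> (\<forall>A\<in>Omega. A \<subseteq> Sg) \<and> \<Union>Omega = Sg"

(* partial map Sg^* -> {+,-}, with + = True, - = False *)
definition observation :: "'a set \<Rightarrow> ('a list \<Rightarrow> bool option) \<Rightarrow> bool" where
  "observation Sg Obs \<longleftrightarrow> finite (dom Obs) \<and> dom Obs \<subseteq> lists Sg"

definition models :: "'a set \<Rightarrow> 'a set set \<Rightarrow> ('a list \<Rightarrow> bool option) \<Rightarrow> bool" where
  "models Sg Omega Obs \<longleftrightarrow>
     (\<exists>L :: 'a set \<Rightarrow> 'a list set.
        (\<forall>A\<in>Omega. L A \<subseteq> lists A) \<and>
        (let Lang = {w \<in> lists Sg. \<forall>A\<in>Omega. proj w A \<in> L A}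
         in \<forall>s\<in>dom Obs. (s \<in> Lang \<longleftrightarrow> Obs s = Some True)))"

definition CED :: "'a set set \<Rightarrow> ('a list \<Rightarrow> bool option)
                   \<Rightarrow> ('a list \<times> ('a set \<Rightarrow> 'a list)) set" where
  "CED Omega Obs =
     {(sN, P). Obs sN = Some False \<and> P \<in> Omega \<rightarrow>\<^sub>E dom Obs \<and>
        (\<forall>A\<in>Omega. Obs (P A) = Some True \<and> proj sN A = proj (P A) A)}"

definition Dm :: "'a set \<Rightarrow> ('a list \<times> ('a set \<Rightarrow> 'a list)) \<Rightarrow> 'a set" where
  "Dm A ce = {a. count_list (fst ce) a \<noteq> count_list (snd ce A) a}"

definition occ :: "'a list \<Rightarrow> nat \<Rightarrow> nat" where
  "occ u j = card {k. k < j \<and> u ! k = u ! j}"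

(* the order-preserving position bijection pi with u[j] = w[pi j] *)
definition posmap :: "'a list \<Rightarrow> 'a list \<Rightarrow> nat \<Rightarrow> nat" where
  "posmap u w j = (THE p. p < length w \<and> w ! p = u ! j \<and> occ w p = occ u j)"

definition Do :: "'a set \<Rightarrow> 'a set \<Rightarrow> ('a list \<times> ('a set \<Rightarrow> 'a list)) \<Rightarrow> 'a set set" where
  "Do Sg A ce =
     (let theta = Sg - Dm A ce; u = proj (fst ce) theta; w = proj (snd ce A) theta
      in {{u ! j, u ! k} | j k. j < k \<and> k < length u \<and> posmap u w j > posmap u w k})"

definition is_discrepancy :: "'a set \<Rightarrow> 'a set set \<Rightarrow> ('a list \<times> ('a set \<Rightarrow> 'a list))
                             \<Rightarrow> 'a set \<Rightarrow> bool" where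
  "is_discrepancy Sg Omega ce delta \<longleftrightarrow> delta \<subseteq> Sg \<and>
     (\<forall>A\<in>Omega. delta \<inter> Dm A ce \<noteq> {} \<or> (\<exists>p\<in>Do Sg A ce. p \<subseteq> delta))"

definition Disc :: "'a set \<Rightarrow> 'a set set \<Rightarrow> ('a list \<times> ('a set \<Rightarrow> 'a list)) \<Rightarrow> 'a set set" where
  "Disc Sg Omega ce = {delta. is_discrepancy Sg Omega ce delta}"

definition refines :: "'a set set \<Rightarrow> 'a set set \<Rightarrow> bool" where
  "refines Omega Omega' \<longleftrightarrow> (\<forall>A\<in>Omega. \<exists>B\<in>Omega'. A \<subseteq> B)"

definition strictly_refines :: "'a set set \<Rightarrow> 'a set set \<Rightarrow> bool" where
  "strictly_refines Omega Omega' \<longleftrightarrow> refines Omega Omega' \<and> \<not> refines Omega' Omega"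

definition step :: "'a set \<Rightarrow> ('a list \<Rightarrow> bool option) \<Rightarrow> 'a set set \<Rightarrow> 'a set set \<Rightarrow> bool" where
  "step Sg Obs Omega Omega' \<longleftrightarrow> CED Omega Obs \<noteq> {} \<and>
     (\<exists>S delta. S \<subseteq> CED Omega Obs \<and> S \<noteq> {} \<and>
        (\<forall>ce\<in>S. delta ce \<in> Disc Sg Omega ce) \<and> Omega' = Omega \<union> delta ` S)"

definition full_step :: "'a set \<Rightarrow> ('a list \<Rightarrow> bool option) \<Rightarrow> 'a set set \<Rightarrow> 'a set set \<Rightarrow> bool" where
  "full_step Sg Obs Omega Omega' \<longleftrightarrow> CED Omega Obs \<noteq> {} \<and>
     (\<exists>delta. (\<forall>ce\<in>CED Omega Obs. delta ce \<in> Disc Sg Omega ce) \<and>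
        Omega' = Omega \<union> delta ` CED Omega Obs)"

definition is_run :: "('b \<Rightarrow> 'b \<Rightarrow> bool) \<Rightarrow> 'b list \<Rightarrow> bool" where
  "is_run R xs \<longleftrightarrow> xs \<noteq> [] \<and> (\<forall>i. Suc i < length xs \<longrightarrow> R (xs ! i) (xs ! Suc i))"

end

theory Submission
  imports Defs "HOL-Library.Sublist"
begin

text \<open>A counter-example for \<open>\<Omega>\<close> agrees with its positive witness on every block \<open>A \<in> \<Omega>\<close>:
  both words have the same projection onto \<open>A\<close>. Hence no symbol of \<open>A\<close> occurs a different number
  of times, and no two symbols of \<open>A\<close> appear in a different relative order. So every discrepancy
  meets some symbol outside \<open>A\<close> and is contained in no block of \<open>\<Omega>\<close>: each refinement step adds
  a genuinely new block from \<open>\<P>(\<Sigma>)\<close>, which bounds the number of steps by \<open>|\<P>(\<Sigma>)|\<close>.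
  When no counter-example is left, the languages of projections of positive words witness
  \<open>\<Omega> \<Turnstile> Obs\<close>; as \<open>\<Omega>\<^sub>0 \<Turnstile> Obs\<close> fails, at least one step was made, so the refinement is strict.\<close>

text \<open>Tagging each letter with the number of its earlier occurrences makes all entries distinct;
  \<open>posmap\<close> then maps a position of \<open>u\<close> to the position of the same tag in \<open>w\<close>.\<close>

definition occ_tagged :: "'a list \<Rightarrow> ('a \<times> nat) list" where
  "occ_tagged xs = map (\<lambda>i. (xs ! i, occ xs i)) [0..<length xs]"

lemma occ_eq_count_list_take:
  assumes "i < length xs"
  shows "occ xs i = count_list (take i xs) (xs ! i)"
proof -
  have "{k. k < i \<and> xs ! k = xs ! i} = {k. k < length (take i xs) \<and> xs ! i = take i xs ! k}"
    using assms by auto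
  then show ?thesis
    by (simp add: occ_def count_list_eq_length_filter length_filter_conv_card)
qed

lemma length_occ_tagged [simp]: "length (occ_tagged xs) = length xs"
  by (simp add: occ_tagged_def)

lemma nth_occ_tagged: "i < length xs \<Longrightarrow> occ_tagged xs ! i = (xs ! i, occ xs i)"
  by (simp add: occ_tagged_def)

lemma occ_tagged_Nil [simp]: "occ_tagged [] = []"
  by (simp add: occ_tagged_def)

lemma occ_tagged_snoc [simp]: "occ_tagged (xs @ [c]) = occ_tagged xs @ [(c, count_list xs c)]"
  by (simp add: occ_tagged_def occ_eq_count_list_take nth_append)

lemma set_occ_tagged: "set (occ_tagged xs) = {(c, m). m < count_list xs c}"
  by (induction xs rule: rev_induct) (auto simp: less_Suc_eq split: if_splits)

lemma distinct_occ_tagged: "distinct (occ_tagged xs)"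
  by (induction xs rule: rev_induct) (auto simp: set_occ_tagged)

lemma count_list_filter: "Q c \<Longrightarrow> count_list (filter Q xs) c = count_list xs c"
  by (induction xs) auto

lemma occ_tagged_filter: "occ_tagged (filter Q xs) = filter (\<lambda>t. Q (fst t)) (occ_tagged xs)"
  by (induction xs rule: rev_induct) (auto simp: count_list_filter)

lemma posmap_occ_tagged:
  assumes i: "i < length u" and cnt: "count_list u (u ! i) \<le> count_list w (u ! i)"
  shows "posmap u w i < length w \<and> occ_tagged w ! posmap u w i = occ_tagged u ! i"
proof -
  have "occ_tagged u ! i \<in> set (occ_tagged u)"
    using i by (simp add: nth_mem)
  then have "occ_tagged u ! i \<in> set (occ_tagged w)"
    using i cnt by (auto simp: set_occ_tagged nth_occ_tagged)
  then obtain q where q: "q < length w" "occ_tagged w ! q = occ_tagged u ! i"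
    by (metis in_set_conv_nth length_occ_tagged)
  have tag_iff: "(r < length w \<and> w ! r = u ! i \<and> occ w r = occ u i)
      \<longleftrightarrow> (r < length w \<and> occ_tagged w ! r = occ_tagged u ! i)" for r
    using i by (auto simp: nth_occ_tagged)
  have "posmap u w i = q"
    unfolding posmap_def tag_iff
  proof (rule the_equality)
    fix r assume "r < length w \<and> occ_tagged w ! r = occ_tagged u ! i"
    then show "r = q"
      using q distinct_occ_tagged by (metis length_occ_tagged nth_eq_iff_index_eq)
  qed (use q in blast)
  with q show ?thesis by simp
qed

lemma subseq_nth_pair: "i < j \<Longrightarrow> j < length L \<Longrightarrow> subseq [L ! i, L ! j] L"
proof (induction L arbitrary: i j)
  case (Cons x L)
  then show ?case by (cases i; cases j) (auto simp: subseq_singleton_left)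
qed simp

lemma distinct_subseq_pair_asym: "distinct L \<Longrightarrow> subseq [a, b] L \<Longrightarrow> \<not> subseq [b, a] L"
  by (induction L) (auto simp: subseq_singleton_left dest: subseq_Cons' split: if_splits)

lemma posmap_mono_on_common_proj:
  assumes cnt: "\<And>c. count_list u c = count_list w c"
    and proj: "proj u A = proj w A"
    and jk: "j < k" "k < length u" and in_A: "u ! j \<in> A" "u ! k \<in> A"
  shows "posmap u w j < posmap u w k"
proof -
  define Q where "Q = (\<lambda>t :: 'a \<times> nat. fst t \<in> A)"
  define tj tk where "tj = occ_tagged u ! j" and "tk = occ_tagged u ! k"
  have pj: "posmap u w j < length w" "occ_tagged w ! posmap u w j = tj"
    using posmap_occ_tagged[of j u w] jk cnt by (auto simp: tj_def)
  have pk: "posmap u w k < length w" "occ_tagged w ! posmap u w k = tk"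
    using posmap_occ_tagged[of k u w] jk cnt by (auto simp: tk_def)
  have Q_tags: "Q tj" "Q tk"
    using in_A jk by (auto simp: Q_def tj_def tk_def nth_occ_tagged)
  have filter_eq: "filter Q (occ_tagged u) = filter Q (occ_tagged w)"
    using arg_cong[OF proj, of occ_tagged] by (simp add: proj_def occ_tagged_filter Q_def)
  have "tj \<noteq> tk"
    using jk distinct_occ_tagged[of u] by (simp add: tj_def tk_def nth_eq_iff_index_eq)
  then have "posmap u w j \<noteq> posmap u w k"
    using pj pk by metis
  moreover have "\<not> posmap u w k < posmap u w j"
  proof
    assume "posmap u w k < posmap u w j"
    then have "subseq [tk, tj] (occ_tagged w)"
      using subseq_nth_pair[of "posmap u w k" "posmap u w j" "occ_tagged w"] pj pk by simp
    then have "subseq [tk, tj] (filter Q (occ_tagged w))"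
      using subseq_filter[where P = Q] Q_tags by fastforce
    moreover have "subseq [tj, tk] (occ_tagged u)"
      using subseq_nth_pair[of j k "occ_tagged u"] jk by (simp add: tj_def tk_def)
    then have "subseq [tj, tk] (filter Q (occ_tagged w))"
      using subseq_filter[where P = Q] Q_tags filter_eq by fastforce
    ultimately show False
      using distinct_subseq_pair_asym[OF distinct_filter[OF distinct_occ_tagged]] by blast
  qed
  ultimately show ?thesis by simp
qed

lemma count_list_proj: "a \<in> A \<Longrightarrow> count_list (proj x A) a = count_list x a"
  unfolding proj_def by (rule count_list_filter)

lemma proj_proj_commute: "proj (proj x A) B = proj (proj x B) A"
  unfolding proj_def by (simp add: conj_commute)

lemma CED_proj_eq: "ce \<in> CED Omega Obs \<Longrightarrow> A \<in> Omega \<Longrightarrow> proj (fst ce) A = proj (snd ce A) A"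
  by (auto simp: CED_def)

lemma Dm_disjoint_CED:
  assumes "ce \<in> CED Omega Obs" "A \<in> Omega"
  shows "Dm A ce \<inter> A = {}"
  using count_list_proj[of _ A "fst ce"] count_list_proj[of _ A "snd ce A"] CED_proj_eq[OF assms]
  by (force simp: Dm_def)

lemma Do_not_subset_CED:
  assumes ce: "ce \<in> CED Omega Obs" "A \<in> Omega" and p: "p \<in> Do Sg A ce"
  shows "\<not> p \<subseteq> A"
proof
  assume "p \<subseteq> A"
  define theta where "theta = Sg - Dm A ce"
  define u where "u = proj (fst ce) theta"
  define w where "w = proj (snd ce A) theta"
  obtain j k where p_eq: "p = {u ! j, u ! k}" and jk: "j < k" "k < length u"
    and inversion: "posmap u w k < posmap u w j"
    using p by (auto simp: Do_def Let_def theta_def u_def w_def)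
  have "count_list u c = count_list w c" for c
  proof (cases "c \<in> theta")
    case True
    then show ?thesis by (simp add: u_def w_def count_list_proj theta_def Dm_def)
  next
    case False
    then show ?thesis by (simp add: u_def w_def proj_def)
  qed
  moreover have "proj u A = proj w A"
    using CED_proj_eq[OF ce] by (simp add: u_def w_def proj_proj_commute)
  ultimately have "posmap u w j < posmap u w k"
    using posmap_mono_on_common_proj jk \<open>p \<subseteq> A\<close> p_eq by (metis insert_subset)
  with inversion show False by simp
qed

lemma discrepancy_not_subset_block:
  assumes "ce \<in> CED Omega Obs" "A \<in> Omega" "is_discrepancy Sg Omega ce delta"
  shows "\<not> delta \<subseteq> A"
  using assms Dm_disjoint_CED[OF assms(1,2)] Do_not_subset_CED[OF assms(1,2)]
  unfolding is_discrepancy_def by blast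

lemma CED_empty_imp_models:
  assumes obs: "observation Sg Obs" and no_ce: "CED Omega Obs = {}"
  shows "models Sg Omega Obs"
proof -
  define L where "L = (\<lambda>A. {proj s A | s. Obs s = Some True})"
  have "s \<in> {w \<in> lists Sg. \<forall>A\<in>Omega. proj w A \<in> L A} \<longleftrightarrow> Obs s = Some True"
    if s: "s \<in> dom Obs" for s
  proof
    assume "s \<in> {w \<in> lists Sg. \<forall>A\<in>Omega. proj w A \<in> L A}"
    then have "\<forall>A\<in>Omega. \<exists>t. Obs t = Some True \<and> proj s A = proj t A"
      by (auto simp: L_def)
    then obtain P where P: "\<forall>A\<in>Omega. Obs (P A) = Some True \<and> proj s A = proj (P A) A"
      by metis
    show "Obs s = Some True"
    proof (rule ccontr)
      assume "Obs s \<noteq> Some True"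
      with s P have "(s, restrict P Omega) \<in> CED Omega Obs"
        by (auto simp: CED_def restrict_PiE_iff)
      with no_ce show False by simp
    qed
  qed (use s obs in \<open>auto simp: L_def observation_def\<close>)
  moreover have "\<forall>A\<in>Omega. L A \<subseteq> lists A"
    by (auto simp: L_def proj_def)
  ultimately show ?thesis
    unfolding models_def Let_def by blast
qed

lemma step_new_block:
  assumes "step Sg Obs Omega Omega'"
  shows "\<exists>d\<in>Omega'. \<forall>A\<in>Omega. \<not> d \<subseteq> A"
proof -
  obtain S delta where S: "S \<subseteq> CED Omega Obs" "S \<noteq> {}"
    "\<forall>ce\<in>S. delta ce \<in> Disc Sg Omega ce" "Omega' = Omega \<union> delta ` S"
    using assms unfolding step_def by blast
  then obtain ce where ce: "ce \<in> S" by blast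
  with S have ce_CED: "ce \<in> CED Omega Obs"
    and disc: "is_discrepancy Sg Omega ce (delta ce)" and new: "delta ce \<in> Omega'"
    by (auto simp: Disc_def)
  show ?thesis
    using discrepancy_not_subset_block[OF ce_CED _ disc] new by blast
qed

lemma step_psubset:
  assumes "step Sg Obs Omega Omega'"
  shows "Omega \<subset> Omega'"
proof -
  have "Omega \<subseteq> Omega'"
    using assms unfolding step_def by blast
  moreover obtain d where "d \<in> Omega'" "\<forall>A\<in>Omega. \<not> d \<subseteq> A"
    using step_new_block[OF assms] by blast
  ultimately show ?thesis by blast
qed

lemma step_Pow:
  assumes "step Sg Obs Omega Omega'" "Omega \<subseteq> Pow Sg"
  shows "Omega' \<subseteq> Pow Sg"
proof -
  obtain S delta where "\<forall>ce\<in>S. delta ce \<in> Disc Sg Omega ce" "Omega' = Omega \<union> delta ` S"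
    using assms(1) unfolding step_def by blast
  with assms(2) show ?thesis
    by (auto simp: Disc_def is_discrepancy_def)
qed

lemma is_run_full_step_imp_step: "is_run (full_step Sg Obs) Oms \<Longrightarrow> is_run (step Sg Obs) Oms"
  unfolding is_run_def full_step_def step_def by blast

lemma is_run_nth_mono:
  assumes "is_run R Oms" and "\<And>x y. R x y \<Longrightarrow> x \<subseteq> y" and "i \<le> j" "j < length Oms"
  shows "Oms ! i \<subseteq> Oms ! j"
  using assms(3,4)
proof (induction j)
  case (Suc j)
  then show ?case
    using assms(1,2) by (cases "i = Suc j") (auto simp: is_run_def)
qed simp

lemma run_card_ge_index:
  assumes run: "is_run (step Sg Obs) Oms" and hd: "hd Oms \<subseteq> Pow Sg" and "finite Sg"
    and "i < length Oms"
  shows "Oms ! i \<subseteq> Pow Sg \<and> i \<le> card (Oms ! i)"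
  using assms(4)
proof (induction i)
  case 0
  then show ?case using hd by (simp add: hd_conv_nth)
next
  case (Suc i)
  have step: "step Sg Obs (Oms ! i) (Oms ! Suc i)"
    using run Suc.prems by (simp add: is_run_def)
  have in_Pow: "Oms ! Suc i \<subseteq> Pow Sg"
    using step_Pow[OF step] Suc by simp
  then have "finite (Oms ! Suc i)"
    using finite_subset \<open>finite Sg\<close> by blast
  then have "card (Oms ! i) < card (Oms ! Suc i)"
    using psubset_card_mono step_psubset[OF step] by blast
  with Suc in_Pow show ?case by simp
qed

lemma run_length_le_card_Pow:
  assumes "is_run (step Sg Obs) Oms" "hd Oms \<subseteq> Pow Sg" "finite Sg"
  shows "length Oms - 1 \<le> card (Pow Sg)"
proof -
  have "Oms \<noteq> []" using assms(1) by (simp add: is_run_def)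
  then have "Oms ! (length Oms - 1) \<subseteq> Pow Sg" "length Oms - 1 \<le> card (Oms ! (length Oms - 1))"
    using run_card_ge_index[OF assms] by simp_all
  moreover have "card (Oms ! (length Oms - 1)) \<le> card (Pow Sg)" if "Oms ! (length Oms - 1) \<subseteq> Pow Sg"
    using card_mono[OF _ that] \<open>finite Sg\<close> by simp
  ultimately show ?thesis by linarith
qed

lemma no_infinite_step_chain:
  assumes "finite Sg" "f 0 \<subseteq> Pow Sg" "\<forall>k. step Sg Obs (f k) (f (Suc k))"
  shows False
proof -
  define Oms where "Oms = map f [0..<Suc (Suc (card (Pow Sg)))]"
  have "is_run (step Sg Obs) Oms"
    using assms(3) by (simp add: Oms_def is_run_def del: upt_Suc)
  moreover have "hd Oms \<subseteq> Pow Sg"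
    using assms(2) by (simp add: Oms_def upt_conv_Cons del: upt_Suc)
  ultimately have "length Oms - 1 \<le> card (Pow Sg)"
    using run_length_le_card_Pow assms(1) by blast
  then show False by (simp add: Oms_def)
qed

lemma run_strictly_refines:
  assumes run: "is_run (step Sg Obs) Oms" and long: "Suc 0 < length Oms"
  shows "strictly_refines (hd Oms) (last Oms)"
proof -
  have "step Sg Obs (Oms ! 0) (Oms ! 1)"
    using run long by (simp add: is_run_def)
  then obtain d where d: "d \<in> Oms ! 1" "\<forall>A\<in>Oms ! 0. \<not> d \<subseteq> A"
    using step_new_block by blast
  have step_subset: "\<And>x y. step Sg Obs x y \<Longrightarrow> x \<subseteq> y"
    using step_psubset by blast
  have nonempty: "Oms \<noteq> []"
    using long by (cases Oms) auto
  then have "last Oms = Oms ! (length Oms - 1)"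
    by (rule last_conv_nth)
  then have below_last: "Oms ! i \<subseteq> last Oms" if "i < length Oms" for i
    using is_run_nth_mono[OF run step_subset, of i "length Oms - 1"] that by simp
  have "Oms ! 0 \<subseteq> last Oms" "Oms ! 1 \<subseteq> last Oms"
    using below_last[of 0] below_last[of 1] long nonempty by simp_all
  with d show ?thesis
    unfolding strictly_refines_def refines_def hd_conv_nth[OF nonempty] by blast
qed

theorem mainTheorem12:
  fixes Sg :: "'a set" and Omega0 :: "'a set set" and Obs :: "'a list \<Rightarrow> bool option"
  assumes "finite Sg"
    and "distribution Sg Omega0"
    and "observation Sg Obs"
    and "\<not> models Sg Omega0 Obs"
  shows "(\<nexists>f :: nat \<Rightarrow> 'a set set. f 0 = Omega0 \<and> (\<forall>k. step Sg Obs (f k) (f (Suc k))))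
    \<and> (\<forall>Oms. is_run (step Sg Obs) Oms \<and> hd Oms = Omega0 \<and> CED (last Oms) Obs = {}
          \<longrightarrow> models Sg (last Oms) Obs \<and> strictly_refines Omega0 (last Oms))
    \<and> (\<forall>Oms. is_run (full_step Sg Obs) Oms \<and> hd Oms = Omega0 \<and> CED (last Oms) Obs = {}
          \<longrightarrow> length Oms - 1 \<le> card (Pow Sg))"
proof -
  have Omega0_Pow: "Omega0 \<subseteq> Pow Sg"
    using assms(2) by (auto simp: distribution_def)
  show ?thesis
  proof (intro conjI allI impI)
    show "\<nexists>f. f 0 = Omega0 \<and> (\<forall>k. step Sg Obs (f k) (f (Suc k)))"
      using no_infinite_step_chain[of Sg _ Obs] Omega0_Pow assms(1) by blast
  next
    fix Oms assume "is_run (step Sg Obs) Oms \<and> hd Oms = Omega0 \<and> CED (last Oms) Obs = {}"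
    then show "models Sg (last Oms) Obs"
      using CED_empty_imp_models assms(3) by blast
  next
    fix Oms assume run: "is_run (step Sg Obs) Oms \<and> hd Oms = Omega0 \<and> CED (last Oms) Obs = {}"
    then have "models Sg (last Oms) Obs"
      using CED_empty_imp_models assms(3) by blast
    with run assms(4) have "last Oms \<noteq> hd Oms" "Oms \<noteq> []"
      by (auto simp: is_run_def)
    then have "Suc 0 < length Oms"
      by (cases Oms) auto
    then show "strictly_refines Omega0 (last Oms)"
      using run run_strictly_refines by blast
  next
    fix Oms assume "is_run (full_step Sg Obs) Oms \<and> hd Oms = Omega0 \<and> CED (last Oms) Obs = {}"
    then have "is_run (step Sg Obs) Oms" "hd Oms \<subseteq> Pow Sg"
      using Omega0_Pow is_run_full_step_imp_step by auto
    then show "length Oms - 1 \<le> card (Pow Sg)"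
      using run_length_le_card_Pow assms(1) by blast
  qed
qed

end
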